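(* Let $n\ge3$ and $2\le k\le n-1$. An oriented cycle $\overrightarrow{C_n}$ for which $\{k\}$ is a distance set is $\{k\}$-antimagic if and only if it is unidirectional.
   Context: An oriented graph is a simple graph each of whose edges is given one direction (an arc $(u,v)$ goes from $u$ to $v$). For vertices $u,v$, $d(u,v)$ is the length of a shortest directed path from $u$ to $v$ ($d(u,u)=0$, $\infty$ if no path). A distance set of an oriented graph is a nonempty set $D$ of nonnegative integers each of which is a finite distance $d(u,v)$ for some pair of vertices. $N_D(v)=\{y : d(v,y)\in D\}$; for a bijection $f:V\to\{1,\dots,|V|\}$, $\omega_D(v)=\sum_{x\in N_D(v)}f(x)$ (empty sum $0$); $f$ is $D$-antimagic if distinct vertices have distinct $D$-weights, and the graph is $D$-antimagic if such an $f$ exists. An oriented cycle $\overrightarrow{C_n}$ is an orientation of the cycle on $v_1,\dots,v_n$. It is unidirectional if (up to relabeling) its arcs are $(v_i,v_{i+1})$, $1\le i\le n-1$, and $(v_n,v_1)$. *)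

theory Defs
  imports Main
begin

text \<open>A digraph is given by a vertex set V and an arc relation A (arcs assumed inside V).
  d(u,v) = m means: there is a directed walk of length m from u to v and none shorter.\<close>

definition is_dist :: "('a \<Rightarrow> 'a \<Rightarrow> bool) \<Rightarrow> 'a \<Rightarrow> 'a \<Rightarrow> nat \<Rightarrow> bool" where
  "is_dist A u v m \<longleftrightarrow> (A ^^ m) u v \<and> (\<forall>j<m. \<not> (A ^^ j) u v)"

definition distance_set :: "'a set \<Rightarrow> ('a \<Rightarrow> 'a \<Rightarrow> bool) \<Rightarrow> nat set \<Rightarrow> bool" where
  "distance_set V A D \<longleftrightarrow> D \<noteq> {} \<and> (\<forall>m\<in>D. \<exists>u\<in>V. \<exists>v\<in>V. is_dist A u v m)"

definition D_nbhd :: "'a set \<Rightarrow> ('a \<Rightarrow> 'a \<Rightarrow> bool) \<Rightarrow> nat set \<Rightarrow> 'a \<Rightarrow> 'a set" where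
  "D_nbhd V A D v = {y \<in> V. \<exists>m\<in>D. is_dist A v y m}"

definition D_weight :: "'a set \<Rightarrow> ('a \<Rightarrow> 'a \<Rightarrow> bool) \<Rightarrow> nat set \<Rightarrow> ('a \<Rightarrow> nat) \<Rightarrow> 'a \<Rightarrow> nat" where
  "D_weight V A D f v = (\<Sum>x\<in>D_nbhd V A D v. f x)"

definition D_antimagic_labeling :: "'a set \<Rightarrow> ('a \<Rightarrow> 'a \<Rightarrow> bool) \<Rightarrow> nat set \<Rightarrow> ('a \<Rightarrow> nat) \<Rightarrow> bool" where
  "D_antimagic_labeling V A D f \<longleftrightarrow> bij_betw f V {1..card V} \<and> inj_on (D_weight V A D f) V"

definition D_antimagic :: "'a set \<Rightarrow> ('a \<Rightarrow> 'a \<Rightarrow> bool) \<Rightarrow> nat set \<Rightarrow> bool" where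
  "D_antimagic V A D \<longleftrightarrow> (\<exists>f. D_antimagic_labeling V A D f)"

text \<open>Oriented cycle on vertices 0,...,n-1 (edges {i, (i+1) mod n}); the edge {i,(i+1) mod n}
  is oriented i -> (i+1) mod n if ori i, and (i+1) mod n -> i otherwise.
  Every orientation of C_n arises this way.\<close>

definition cyc_arc :: "nat \<Rightarrow> (nat \<Rightarrow> bool) \<Rightarrow> nat \<Rightarrow> nat \<Rightarrow> bool" where
  "cyc_arc n ori u v \<longleftrightarrow> u < n \<and> v < n \<and>
     ((v = Suc u mod n \<and> ori u) \<or> (u = Suc v mod n \<and> \<not> ori v))"

definition unidirectional :: "nat \<Rightarrow> 'a set \<Rightarrow> ('a \<Rightarrow> 'a \<Rightarrow> bool) \<Rightarrow> bool" where
  "unidirectional n V A \<longleftrightarrow> (\<exists>p. bij_betw p {0..<n} V \<and>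
     (\<forall>u v. A u v \<longleftrightarrow> (\<exists>i<n. u = p i \<and> v = p (Suc i mod n))))"

end

(*
  In a unidirectional cycle the only vertex at distance k from p i is p (i + k), because k < n.
  So the {k}-weight of a vertex is the label of the vertex k steps ahead, and every bijective
  labelling is {k}-antimagic.

  Any other orientation has a sink s. A neighbour of s whose second arc also points towards it
  has s as its only out-neighbour; if neither neighbour of s is of this kind, then the arcs
  leaving the two neighbours of s point away from s and force a second sink on the rest of the
  cycle. Either way there are two distinct vertices from which no walk of length 2, hence none of
  length k \<ge> 2, starts; both get {k}-weight 0.
*)
theory Submission
  imports Defs "HOL-Number_Theory.Cong"
begin

lemma add_mod_cancel_left_less:
  fixes x a b n :: nat
  assumes "a < n" "b < n" "(x + a) mod n = (x + b) mod n"
  shows "a = b"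
  using assms cong_add_lcancel_nat[of x a b n] by (simp add: cong_def)

lemma ex_switch_between:
  fixes a b :: nat
  assumes "P a" "\<not> P b" "a < b"
  shows "\<exists>c. a \<le> c \<and> c < b \<and> P c \<and> \<not> P (Suc c)"
  using assms
proof (induction b)
  case 0
  then show ?case by simp
next
  case (Suc b)
  show ?case
  proof (cases "P b")
    case True
    then show ?thesis using Suc.prems by (intro exI[of _ b]) auto
  next
    case False
    with Suc have "\<exists>c. a \<le> c \<and> c < b \<and> P c \<and> \<not> P (Suc c)"
      by (metis less_SucE)
    then show ?thesis by (meson less_Suc_eq)
  qed
qed

lemma relpowp_2_empty_if_successors_sinks:
  assumes "\<And>w y. A v w \<Longrightarrow> \<not> A w y"
  shows "\<not> (A ^^ 2) v y"
  using assms by (auto simp: numeral_2_eq_2 elim!: relpowp_Suc_E2)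

lemma D_nbhd_empty_if_no_2_walk:
  assumes "\<And>y. \<not> (A ^^ 2) v y" "2 \<le> k"
  shows "D_nbhd V A {k} v = {}"
proof -
  have "\<not> (A ^^ k) v y" for y
  proof
    assume "(A ^^ k) v y"
    then have "(A ^^ 2 OO A ^^ (k - 2)) v y"
      using \<open>2 \<le> k\<close> by (metis le_add_diff_inverse relpowp_add)
    then show False using assms(1) by blast
  qed
  then show ?thesis by (auto simp: D_nbhd_def is_dist_def)
qed

lemma not_D_antimagic_if_empty_nbhds:
  assumes "x \<in> V" "y \<in> V" "x \<noteq> y" "D_nbhd V A D x = {}" "D_nbhd V A D y = {}"
  shows "\<not> D_antimagic V A D"
proof
  assume "D_antimagic V A D"
  then obtain f where "inj_on (D_weight V A D f) V"
    by (auto simp: D_antimagic_def D_antimagic_labeling_def)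
  moreover have "D_weight V A D f x = D_weight V A D f y"
    using assms(4,5) by (simp add: D_weight_def)
  ultimately show False using assms(1-3) by (meson inj_onD)
qed

lemma unidirectional_relpowp:
  assumes p: "bij_betw p {0..<n} V"
    and A: "\<And>u v. A u v \<longleftrightarrow> (\<exists>i<n. u = p i \<and> v = p (Suc i mod n))"
    and "i < n"
  shows "(A ^^ m) (p i) y \<longleftrightarrow> y = p ((i + m) mod n)"
proof (induction m arbitrary: y)
  case 0
  then show ?case using \<open>i < n\<close> by auto
next
  case (Suc m)
  have succ: "A (p j) y \<longleftrightarrow> y = p (Suc j mod n)" if "j < n" for j y
    using that p A by (auto simp: bij_betw_def inj_on_eq_iff)
  have "(A ^^ Suc m) (p i) y \<longleftrightarrow> A (p ((i + m) mod n)) y"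
    using Suc.IH by (auto simp: relpowp_Suc_right)
  also have "\<dots> \<longleftrightarrow> y = p ((i + Suc m) mod n)"
    using \<open>i < n\<close> by (simp add: succ mod_Suc_eq)
  finally show ?case .
qed

lemma unidirectional_D_nbhd:
  assumes p: "bij_betw p {0..<n} V"
    and A: "\<And>u v. A u v \<longleftrightarrow> (\<exists>i<n. u = p i \<and> v = p (Suc i mod n))"
    and "i < n" "k < n"
  shows "D_nbhd V A {k} (p i) = {p ((i + k) mod n)}"
proof -
  have inj: "p a = p b \<longleftrightarrow> a = b" if "a < n" "b < n" for a b
    using p that by (auto simp: bij_betw_def inj_on_eq_iff)
  have "p ((i + j) mod n) \<noteq> p ((i + k) mod n)" if "j < k" for j
  proof -
    have "(i + j) mod n \<noteq> (i + k) mod n"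
      using add_mod_cancel_left_less[of j n k i] that \<open>k < n\<close> by fastforce
    then show ?thesis using \<open>i < n\<close> by (simp add: inj)
  qed
  then have "is_dist A (p i) y k \<longleftrightarrow> y = p ((i + k) mod n)" for y
    using \<open>i < n\<close> by (fastforce simp: is_dist_def unidirectional_relpowp[OF p A] inj)
  moreover have "p ((i + k) mod n) \<in> V"
    using p \<open>i < n\<close> by (auto simp: bij_betw_def)
  ultimately show ?thesis by (auto simp: D_nbhd_def)
qed

lemma unidirectional_D_antimagic_labeling:
  assumes "unidirectional n V A" "k < n" "bij_betw f V {1..card V}"
  shows "D_antimagic_labeling V A {k} f"
proof -
  obtain p where p: "bij_betw p {0..<n} V"
    and A: "\<And>u v. A u v \<longleftrightarrow> (\<exists>i<n. u = p i \<and> v = p (Suc i mod n))"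
    using assms(1) by (auto simp: unidirectional_def)
  have weight: "D_weight V A {k} f (p i) = f (p ((i + k) mod n))" if "i < n" for i
    using unidirectional_D_nbhd[OF p A that \<open>k < n\<close>] by (simp add: D_weight_def)
  have "inj_on (D_weight V A {k} f) V"
  proof (rule inj_onI)
    fix x y
    assume "x \<in> V" "y \<in> V" and eq: "D_weight V A {k} f x = D_weight V A {k} f y"
    then obtain i j where ij: "i < n" "j < n" "x = p i" "y = p j"
      using p by (auto simp: bij_betw_def)
    have "p ((i + k) mod n) \<in> V" "p ((j + k) mod n) \<in> V"
      using p ij by (auto simp: bij_betw_def)
    then have "p ((i + k) mod n) = p ((j + k) mod n)"
      using eq weight ij assms(3) by (auto simp: bij_betw_def inj_on_eq_iff)
    then have "(i + k) mod n = (j + k) mod n"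
      using p ij by (auto simp: bij_betw_def elim!: inj_onD)
    then have "(k + i) mod n = (k + j) mod n"
      by (simp add: add.commute)
    then show "x = y" using add_mod_cancel_left_less ij by blast
  qed
  then show ?thesis using assms(3) by (simp add: D_antimagic_labeling_def)
qed

lemma unidirectional_D_antimagic:
  assumes "unidirectional n V A" "k < n"
  shows "D_antimagic V A {k}"
proof -
  have "finite V"
    using assms(1) bij_betw_finite by (auto simp: unidirectional_def)
  then obtain g where "bij_betw g {1..card V} V"
    using ex_bij_betw_nat_finite_1 by blast
  then have "bij_betw (inv_into {1..card V} g) V {1..card V}"
    by (rule bij_betw_inv_into)
  then show ?thesis
    using unidirectional_D_antimagic_labeling[OF assms] by (auto simp: D_antimagic_def)
qed

lemma Suc_mod_inj:
  fixes u v n :: nat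
  assumes "u < n" "v < n" "Suc u mod n = Suc v mod n"
  shows "u = v"
  using add_mod_cancel_left_less[of u n v 1] assms by simp

lemma cyc_arc_forward_unidirectional:
  assumes "\<And>i. i < n \<Longrightarrow> ori i"
  shows "unidirectional n {0..<n} (cyc_arc n ori)"
  unfolding unidirectional_def
  by (rule exI[of _ id]) (use assms in \<open>auto simp: cyc_arc_def\<close>)

lemma cyc_arc_backward_unidirectional:
  assumes "\<And>i. i < n \<Longrightarrow> \<not> ori i"
  shows "unidirectional n {0..<n} (cyc_arc n ori)"
  unfolding unidirectional_def
proof (intro exI[of _ "\<lambda>i. n - 1 - i"] conjI allI)
  show "bij_betw (\<lambda>i. n - 1 - i) {0..<n} {0..<n}"
    by (rule bij_betw_byWitness[where f' = "\<lambda>i. n - 1 - i"]) auto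
  fix u v
  have "cyc_arc n ori u v \<longleftrightarrow> u < n \<and> v < n \<and> u = Suc v mod n"
    using assms by (auto simp: cyc_arc_def)
  also have "\<dots> \<longleftrightarrow> (\<exists>i<n. u = n - 1 - i \<and> v = n - 1 - Suc i mod n)"
  proof
    assume "u < n \<and> v < n \<and> u = Suc v mod n"
    then show "\<exists>i<n. u = n - 1 - i \<and> v = n - 1 - Suc i mod n"
      by (intro exI[of _ "n - 1 - u"]) (cases "Suc v = n"; auto)
  next
    assume "\<exists>i<n. u = n - 1 - i \<and> v = n - 1 - Suc i mod n"
    then obtain i where "i < n" "u = n - 1 - i" "v = n - 1 - Suc i mod n" by blast
    then show "u < n \<and> v < n \<and> u = Suc v mod n"
      by (cases "Suc i = n") auto
  qed
  finally show "cyc_arc n ori u v \<longleftrightarrow> (\<exists>i<n. u = n - 1 - i \<and> v = n - 1 - Suc i mod n)" .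
qed

lemma cyc_ex_switch_between:
  fixes a b :: nat
  assumes "ori (a mod n)" "\<not> ori (b mod n)" "a < b"
  shows "\<exists>c. a \<le> c \<and> c < b \<and> ori (c mod n) \<and> \<not> ori (Suc (c mod n) mod n)"
  using ex_switch_between[of "\<lambda>j. ori (j mod n)" a b] assms by (simp add: mod_Suc_eq)

lemma cyc_ex_switch:
  assumes "\<not> unidirectional n {0..<n} (cyc_arc n ori)"
  obtains i where "i < n" "ori i" "\<not> ori (Suc i mod n)"
proof -
  obtain a where a: "a < n" "ori a"
    using cyc_arc_backward_unidirectional assms by blast
  obtain b where b: "b < n" "\<not> ori b"
    using cyc_arc_forward_unidirectional assms by blast
  have "ori (a mod n)" "\<not> ori ((b + n) mod n)" "a < b + n"
    using a b by simp_all
  then obtain c where "ori (c mod n)" "\<not> ori (Suc (c mod n) mod n)"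
    using cyc_ex_switch_between by blast
  then show ?thesis using that[of "c mod n"] a by simp
qed

lemma cyc_arc_no_arc_from_sink:
  assumes "i < n" "ori i" "\<not> ori (Suc i mod n)"
  shows "\<not> cyc_arc n ori (Suc i mod n) v"
proof
  assume "cyc_arc n ori (Suc i mod n) v"
  then have "v < n" "Suc v mod n = Suc i mod n" "\<not> ori v"
    using assms(3) by (auto simp: cyc_arc_def)
  then show False using Suc_mod_inj assms(1,2) by blast
qed

lemma cyc_arc_pred_if_not_ori:
  assumes "cyc_arc n ori u v" "\<not> ori u"
  shows "v < n \<and> Suc v mod n = u"
  using assms by (auto simp: cyc_arc_def)

lemma cyc_arc_succ_if_ori_pred:
  assumes "cyc_arc n ori u v" "ori ((u + (n - 1)) mod n)"
  shows "v = Suc u mod n"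
proof (rule ccontr)
  assume "v \<noteq> Suc u mod n"
  then have "v < n" "u = Suc v mod n" "\<not> ori v"
    using assms(1) by (auto simp: cyc_arc_def)
  moreover have "(Suc v mod n + (n - 1)) mod n = (Suc v + (n - 1)) mod n"
    by (simp add: mod_add_left_eq)
  moreover have "Suc v + (n - 1) = v + n"
    using \<open>v < n\<close> by simp
  ultimately show False using assms(2) by auto
qed

lemma cyc_arc_no_2_walk_if_arcs_into_sink:
  assumes "j < n" "ori j" "\<not> ori (Suc j mod n)"
    and "\<And>v. cyc_arc n ori x v \<Longrightarrow> v = Suc j mod n"
  shows "\<not> (cyc_arc n ori ^^ 2) x z"
  using relpowp_2_empty_if_successors_sinks cyc_arc_no_arc_from_sink assms by metis

lemma cyc_ex_second_switch:
  assumes "n \<ge> 3" "i < n" "\<not> ori (Suc i mod n)"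
    and "ori ((i + 2) mod n)" "\<not> ori ((i + (n - 1)) mod n)"
  obtains j where "j < n" "ori j" "\<not> ori (Suc j mod n)" "Suc j mod n \<noteq> Suc i mod n"
proof -
  have "n \<noteq> 3"
    using assms(4,5) by auto
  then have "i + 2 < i + (n - 1)"
    using assms(1) by linarith
  then obtain c where c: "i + 2 \<le> c" "c < i + (n - 1)" "ori (c mod n)" "\<not> ori (Suc (c mod n) mod n)"
    using cyc_ex_switch_between[OF assms(4,5)] by blast
  have "(Suc i + (c - i)) mod n \<noteq> (Suc i + 0) mod n"
    using add_mod_cancel_left_less[of "c - i" n 0 "Suc i"] c(1,2) by fastforce
  then have "Suc (c mod n) mod n \<noteq> Suc i mod n"
    using c(1) by (simp add: mod_Suc_eq)
  then show ?thesis
    using that[of "c mod n"] c assms(1) by simp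
qed

lemma cyc_arc_two_vertices_without_2_walks:
  assumes "n \<ge> 3" "\<not> unidirectional n {0..<n} (cyc_arc n ori)"
  obtains x y where "x < n" "y < n" "x \<noteq> y"
    "\<And>z. \<not> (cyc_arc n ori ^^ 2) x z" "\<And>z. \<not> (cyc_arc n ori ^^ 2) y z"
proof -
  let ?A = "cyc_arc n ori"
  have sink: "\<not> (?A ^^ 2) (Suc j mod n) z" if "j < n" "ori j" "\<not> ori (Suc j mod n)" for j z
    using cyc_arc_no_2_walk_if_arcs_into_sink[OF that] cyc_arc_no_arc_from_sink[OF that] by blast
  obtain i where i: "i < n" "ori i" "\<not> ori (Suc i mod n)"
    using cyc_ex_switch assms(2) by blast
  define s where "s = Suc i mod n"
  have "s < n" "Suc s mod n = (i + 2) mod n"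
    using i by (simp_all add: s_def mod_Suc_eq)
  have "i \<noteq> s" "Suc s mod n \<noteq> s"
    using add_mod_cancel_left_less[of 0 n 1 i] add_mod_cancel_left_less[of 0 n 1 s] assms(1) \<open>s < n\<close>
    by (auto simp: s_def)
  consider "ori ((i + (n - 1)) mod n)" | "\<not> ori (Suc s mod n)"
    | "ori ((i + 2) mod n)" "\<not> ori ((i + (n - 1)) mod n)"
    using \<open>Suc s mod n = (i + 2) mod n\<close> by metis
  then show ?thesis
  proof cases
    case 1
    then have "\<And>v. ?A i v \<Longrightarrow> v = s"
      using cyc_arc_succ_if_ori_pred s_def by blast
    then show ?thesis
      using that[of i s] cyc_arc_no_2_walk_if_arcs_into_sink[OF i] sink[OF i] i \<open>s < n\<close> \<open>i \<noteq> s\<close> s_def by blast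
  next
    case 2
    then have "\<And>v. ?A (Suc s mod n) v \<Longrightarrow> v = s"
      using cyc_arc_pred_if_not_ori Suc_mod_inj \<open>s < n\<close> by blast
    then show ?thesis
      using that[of "Suc s mod n" s] cyc_arc_no_2_walk_if_arcs_into_sink[OF i] sink[OF i] \<open>s < n\<close>
        \<open>Suc s mod n \<noteq> s\<close> s_def by (metis mod_less_divisor zero_less_iff_neq_zero less_nat_zero_code)
  next
    case 3
    then obtain j where "j < n" "ori j" "\<not> ori (Suc j mod n)" "Suc j mod n \<noteq> s"
      using cyc_ex_second_switch assms(1) i s_def by metis
    then show ?thesis
      using that[of "Suc j mod n" s] sink[OF i] sink s_def by simp
  qed
qed

theorem mainTheorem9:
  fixes n k :: nat and ori :: "nat \<Rightarrow> bool"
  assumes "n \<ge> 3" and "2 \<le> k" and "k \<le> n - 1"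
    and "distance_set {0..<n} (cyc_arc n ori) {k}"
  shows "D_antimagic {0..<n} (cyc_arc n ori) {k} \<longleftrightarrow> unidirectional n {0..<n} (cyc_arc n ori)"
proof
  assume antimagic: "D_antimagic {0..<n} (cyc_arc n ori) {k}"
  show "unidirectional n {0..<n} (cyc_arc n ori)"
  proof (rule ccontr)
    assume "\<not> unidirectional n {0..<n} (cyc_arc n ori)"
    then obtain x y where "x < n" "y < n" "x \<noteq> y"
      "\<And>z. \<not> (cyc_arc n ori ^^ 2) x z" "\<And>z. \<not> (cyc_arc n ori ^^ 2) y z"
      using cyc_arc_two_vertices_without_2_walks assms(1) by metis
    then show False
      using antimagic not_D_antimagic_if_empty_nbhds D_nbhd_empty_if_no_2_walk assms(2)
      by (metis atLeastLessThan_iff zero_le)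
  qed
next
  assume "unidirectional n {0..<n} (cyc_arc n ori)"
  moreover have "k < n"
    using assms(1,3) by linarith
  ultimately show "D_antimagic {0..<n} (cyc_arc n ori) {k}"
    by (rule unidirectional_D_antimagic)
qed

end
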